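(* Let $(\rho_n)_{n\ge1}$ with $\rho_n$ a probability measure on $\mathbb{Y}_n$. Then $(\rho_n)$ is CLT-appropriate if and only if there exist reals $(c_k)_{k\ge1}$ and $(d_{k_1,k_2})_{k_1,k_2\ge1}$ such that: (1) for every cycle $\sigma\in S_\infty$ of length $k$, $\lim_n n^{|\sigma|/2}M_{\rho_n}(\sigma)=c_k$; (2) for every two cycles $\sigma_1,\sigma_2$ with disjoint supports and lengths $k_1,k_2$, $\lim_n n^{(|\sigma_1|+|\sigma_2|)/2+1}\kappa_{\rho_n,2}(\sigma_1,\sigma_2)=d_{k_1,k_2}$; (3) for every $r\ge3$ and cycles $\sigma_1,\dots,\sigma_r$ with pairwise disjoint supports, $\lim_n n^{(|\sigma_1|+\dots+|\sigma_r|+r)/2}\kappa_{\rho_n,r}(\sigma_1,\dots,\sigma_r)=0$.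
   Context: $\mathbb{Y}_n$: partitions of $n$; $S_\infty=\bigcup_mS_m$; $|\sigma|$ is the minimal number of transpositions with product $\sigma$. $M_\rho(\sigma)=\sum_{\lambda\in\mathbb{Y}_n}\rho(\lambda)\chi_\lambda(\tau)/\dim\lambda$ if $\sigma$ is conjugate to some $\tau\in S_n$, else $0$. Permutation-cumulant: $\kappa_{\rho,r}(\sigma_1,\dots,\sigma_r)=\sum_{\pi}(-1)^{|\pi|-1}(|\pi|-1)!\prod_{B\in\pi}M_\rho(\prod_{j\in B}\sigma_j)$ over set partitions $\pi$ of $\{1,\dots,r\}$. Young generating function $A_\rho=\sum_{\vec i}M_\rho(\sigma_{\vec i})\prod_{k\ge1}n^{i_k(k-1)/2}x_k^{i_k}/i_k!$ over finitely supported $\vec i$, $\sigma_{\vec i}$ any permutation with $i_k$ cycles of length $k$ for $k\ge2$. $(\rho_n)$ is CLT-appropriate if for some reals $c_i,d_{i,j}$: $\partial_i\ln A_{\rho_n}|_{\vec x=0}\to c_i$, $n\,\partial_i\partial_j\ln A_{\rho_n}|_{\vec x=0}\to d_{i,j}$, and $n^{r/2}\partial_{i_1}\cdots\partial_{i_r}\ln A_{\rho_n}|_{\vec x=0}\to0$ for $r\ge3$ (formal derivatives). *)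

theory Defs
  imports "HOL-Analysis.Analysis" "HOL-Combinatorics.Combinatorics" "HOL-Library.Multiset"
    "HOL-Library.Disjoint_Sets"
begin

definition partitions :: "nat \<Rightarrow> nat list set" where
  "partitions n = {lam. sorted_wrt (\<ge>) lam \<and> 0 \<notin> set lam \<and> sum_list lam = n}"

text \<open>Irreducible character chi_lam evaluated at the conjugacy class with cycle type mu
  (a list of cycle lengths), defined by the Frobenius character formula:
  chi_lam(mu) is the coefficient of x^(lam+delta) in a_delta * p_mu, in l = length lam
  variables.  The coefficient of x^e in p_mu = prod_i (sum_j x_j^(mu_i)) is the number of maps
  f from the parts of mu to the variables with sum_{f i = j} mu_i = e_j.\<close>
definition character :: "nat list \<Rightarrow> nat list \<Rightarrow> int" where
  "character lam mu =
     (let l = length lam in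
      \<Sum>w\<in>{w. w permutes {..<l}}. sign w *
        int (card {f \<in> {..<length mu} \<rightarrow>\<^sub>E {..<l}.
               \<forall>j<l. int (\<Sum>i\<in>{i. i < length mu \<and> f i = j}. mu ! i)
                     = int (lam ! j) + int (l - 1 - j) - int (l - 1 - w j)}))"

definition dimension :: "nat list \<Rightarrow> int" where
  "dimension lam = character lam (replicate (sum_list lam) 1)"

definition prob_on_Y :: "nat \<Rightarrow> (nat list \<Rightarrow> real) \<Rightarrow> bool" where
  "prob_on_Y n rho \<longleftrightarrow> (\<forall>lam\<in>partitions n. rho lam \<ge> 0) \<and> (\<Sum>lam\<in>partitions n. rho lam) = 1"

definition S_inf :: "(nat \<Rightarrow> nat) set" where
  "S_inf = {s. \<exists>m. s permutes {..<m}}"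

definition supp :: "(nat \<Rightarrow> nat) \<Rightarrow> nat set" where
  "supp s = {x. s x \<noteq> x}"

definition tlen :: "(nat \<Rightarrow> nat) \<Rightarrow> nat" where
  "tlen s = (LEAST k. \<exists>ts. length ts = k \<and> (\<forall>(a,b)\<in>set ts. a \<noteq> b) \<and>
                s = foldr (\<lambda>(a,b) g. Transposition.transpose a b \<circ> g) ts id)"

text \<open>s is a cycle of length k (k \<ge> 1; a cycle of length 1 is the identity).\<close>
definition is_cycle_len :: "nat \<Rightarrow> (nat \<Rightarrow> nat) \<Rightarrow> bool" where
  "is_cycle_len k s \<longleftrightarrow> k \<ge> 1 \<and> (\<exists>cs. distinct cs \<and> length cs = k \<and> s = cycle_of_list cs)"

text \<open>Cycle type (as a list of cycle lengths, fixed points included) of t in S_n.\<close>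
definition cycle_type :: "nat \<Rightarrow> (nat \<Rightarrow> nat) \<Rightarrow> nat list" where
  "cycle_type n t = sorted_list_of_multiset (image_mset card (mset_set ((\<lambda>x. orbit t x) ` {..<n})))"

definition conjugate :: "(nat \<Rightarrow> nat) \<Rightarrow> (nat \<Rightarrow> nat) \<Rightarrow> bool" where
  "conjugate s t \<longleftrightarrow> (\<exists>g\<in>S_inf. s = g \<circ> t \<circ> inv g)"

definition Mrho :: "nat \<Rightarrow> (nat list \<Rightarrow> real) \<Rightarrow> (nat \<Rightarrow> nat) \<Rightarrow> real" where
  "Mrho n rho s =
     (if \<exists>t. t permutes {..<n} \<and> conjugate s t then
        (let t = (SOME t. t permutes {..<n} \<and> conjugate s t) in
         \<Sum>lam\<in>partitions n. rho lam * of_int (character lam (cycle_type n t)) / of_int (dimension lam))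
      else 0)"

definition prod_perms :: "(nat \<Rightarrow> nat) list \<Rightarrow> nat set \<Rightarrow> (nat \<Rightarrow> nat)" where
  "prod_perms ss B = foldr (\<lambda>j g. (ss ! j) \<circ> g) (sorted_list_of_set B) id"

definition kappa :: "nat \<Rightarrow> (nat list \<Rightarrow> real) \<Rightarrow> (nat \<Rightarrow> nat) list \<Rightarrow> real" where
  "kappa n rho ss =
     (\<Sum>P\<in>{P. partition_on {..<length ss} P}.
        (-1) ^ (card P - 1) * fact (card P - 1) * (\<Prod>B\<in>P. Mrho n rho (prod_perms ss B)))"

text \<open>A formal power series is given by its coefficients; a monomial prod_k x_k^(i_k) is
  encoded by the multiset containing k with multiplicity i_k.\<close>
type_synonym mps = "nat multiset \<Rightarrow> real"

definition mps_mult :: "mps \<Rightarrow> mps \<Rightarrow> mps" where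
  "mps_mult F G a = (\<Sum>b\<in>{b. b \<subseteq># a}. F b * G (a - b))"

primrec mps_pow :: "mps \<Rightarrow> nat \<Rightarrow> mps" where
  "mps_pow F 0 = (\<lambda>a. if a = {#} then 1 else 0)"
| "mps_pow F (Suc m) = mps_mult F (mps_pow F m)"

text \<open>Logarithm of a series with constant term 1: ln(1+U) = sum_m (-1)^(m-1) U^m / m;
  only m \<le> total degree contributes to a given coefficient.\<close>
definition mps_ln :: "mps \<Rightarrow> mps" where
  "mps_ln A a = (let U = (\<lambda>b. if b = {#} then 0 else A b) in
     \<Sum>m\<in>{1..size a}. (-1) ^ (m - 1) / real m * mps_pow U m a)"

text \<open>Formal partial derivative d_{j_1} ... d_{j_r} F evaluated at x = 0.\<close>
definition deriv0 :: "mps \<Rightarrow> nat list \<Rightarrow> real" where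
  "deriv0 F js = (\<Prod>k\<in>set js. fact (count (mset js) k)) * F (mset js)"

definition num_cycles :: "(nat \<Rightarrow> nat) \<Rightarrow> nat \<Rightarrow> nat" where
  "num_cycles s k = card {Orb. \<exists>x. Orb = orbit s x \<and> card Orb = k}"

definition young_gf :: "nat \<Rightarrow> (nat list \<Rightarrow> real) \<Rightarrow> mps" where
  "young_gf n rho a =
     (if 0 \<in># a then 0 else
      Mrho n rho (SOME s. s \<in> S_inf \<and> (\<forall>k\<ge>2. num_cycles s k = count a k)) *
      (\<Prod>k\<in>set_mset a. real n powr (real (count a k * (k - 1)) / 2) / fact (count a k)))"

definition CLT_appropriate :: "(nat \<Rightarrow> nat list \<Rightarrow> real) \<Rightarrow> bool" where
  "CLT_appropriate rho \<longleftrightarrow> (\<exists>(c :: nat \<Rightarrow> real) (d :: nat \<Rightarrow> nat \<Rightarrow> real).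
     (\<forall>i\<ge>1. (\<lambda>n. deriv0 (mps_ln (young_gf n (rho n))) [i]) \<longlonglongrightarrow> c i) \<and>
     (\<forall>i\<ge>1. \<forall>j\<ge>1. (\<lambda>n. real n * deriv0 (mps_ln (young_gf n (rho n))) [i, j]) \<longlonglongrightarrow> d i j) \<and>
     (\<forall>is. length is \<ge> 3 \<longrightarrow> (\<forall>i\<in>set is. i \<ge> 1) \<longrightarrow>
        (\<lambda>n. real n powr (real (length is) / 2) * deriv0 (mps_ln (young_gf n (rho n))) is)
          \<longlonglongrightarrow> 0))"

end

theory Submission
  imports Defs
begin

text \<open>
  For pairwise disjoint cycles s_1, ..., s_r of lengths k_1, ..., k_r one has
    d_{k_1} ... d_{k_r} ln A_rho at x = 0  =  n^((|s_1| + ... + |s_r|)/2) kappa_{rho,r}(s_1, ..., s_r),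
  so for r = 1, r = 2 and r >= 3 the three conditions defining CLT-appropriateness are literally
  the three conditions of the theorem, the powers of n matching exactly.

  To see the identity, note that |s| = k - 1 for a k-cycle and that M_rho only depends on the
  cycle type. Hence the derivative of A_rho along any subfamily B of the cycles is
  n^(sum_{i in B} |s_i| / 2) M_rho(prod_{i in B} s_i). Expanding
  ln A = sum_m (-1)^(m-1) (A - 1)^m / m, the Leibniz rule distributes the r derivatives over the
  m factors, that is over ordered partitions of {1..r} into m nonempty blocks; forgetting the
  order, the derivative of ln A becomes the sum over set partitions P of {1..r} with weights
  (-1)^(|P|-1) (|P|-1)!, which is the definition of the cumulant.
\<close>

section \<open>Transposition length of a cycle\<close>

definition transp_prod :: "(nat \<times> nat) list \<Rightarrow> nat \<Rightarrow> nat" where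
  "transp_prod ts = foldr (\<lambda>(a, b) g. Transposition.transpose a b \<circ> g) ts id"

lemma transp_prod_simps [simp]:
  "transp_prod [] = id"
  "transp_prod ((a, b) # ts) = Transposition.transpose a b \<circ> transp_prod ts"
  by (simp_all add: transp_prod_def)

text \<open>The class of x in the partition generated by the pairs in ts, named by a representative.
  The product of the transpositions in ts preserves classes, and each pair merges at most two
  classes; hence a permutation moving k points around one cycle needs k - 1 transpositions.\<close>
fun merged_label :: "(nat \<times> nat) list \<Rightarrow> nat \<Rightarrow> nat" where
  "merged_label [] x = x"
| "merged_label ((a, b) # ts) x =
     (if merged_label ts x = merged_label ts a then merged_label ts b else merged_label ts x)"

lemma merged_label_transp_prod: "merged_label ts (transp_prod ts x) = merged_label ts x"
proof (induction ts arbitrary: x)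
  case (Cons p ts)
  then show ?case
    by (cases p) (auto simp: Transposition.transpose_def)
qed simp

lemma card_le_card_merged_label:
  assumes "finite V"
  shows "card V \<le> card (merged_label ts ` V) + length ts"
proof (induction ts)
  case (Cons p ts)
  obtain a b where p: "p = (a, b)" by fastforce
  have "merged_label ts ` V - {merged_label ts a} \<subseteq> merged_label (p # ts) ` V"
    using p by (force simp: image_iff)
  then have "card (merged_label ts ` V - {merged_label ts a}) \<le> card (merged_label (p # ts) ` V)"
    using assms by (intro card_mono) auto
  moreover have "card (merged_label ts ` V) \<le> card (merged_label ts ` V - {merged_label ts a}) + 1"
    using assms by (cases "merged_label ts a \<in> merged_label ts ` V") (simp_all add: card_Diff_singleton)
  ultimately show ?case using Cons by simp
qed simp

lemma cycle_of_list_eq_transp_prod: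
  "distinct cs \<Longrightarrow>
     cycle_of_list cs = transp_prod (zip cs (tl cs)) \<and> (\<forall>(a, b)\<in>set (zip cs (tl cs)). a \<noteq> b)"
  by (induction cs rule: cycle_of_list.induct) (auto dest: set_zip_leftD)

lemma cycle_of_list_nth:
  assumes "distinct cs" "Suc i < length cs"
  shows "cycle_of_list cs (cs ! i) = cs ! Suc i"
proof -
  have "map (cycle_of_list cs) cs = rotate1 cs"
    using cyclic_rotation[OF assms(1), of 1] by simp
  then have "cycle_of_list cs (cs ! i) = rotate1 cs ! i"
    using assms(2) by (metis Suc_lessD nth_map)
  also have "\<dots> = cs ! Suc i"
    using assms(2) by (cases cs) (auto simp: nth_append)
  finally show ?thesis .
qed

lemma tlen_cycle_of_list:
  assumes dist: "distinct cs" and "cs \<noteq> []"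
  shows "tlen (cycle_of_list cs) = length cs - 1"
  unfolding tlen_def transp_prod_def[symmetric]
proof (rule Least_equality)
  show "\<exists>ts. length ts = length cs - 1 \<and> (\<forall>(a, b)\<in>set ts. a \<noteq> b) \<and>
          cycle_of_list cs = transp_prod ts"
    using cycle_of_list_eq_transp_prod[OF dist] by (intro exI[of _ "zip cs (tl cs)"]) simp
next
  fix k
  assume "\<exists>ts. length ts = k \<and> (\<forall>(a, b)\<in>set ts. a \<noteq> b) \<and> cycle_of_list cs = transp_prod ts"
  then obtain ts where ts: "length ts = k" "cycle_of_list cs = transp_prod ts" by blast
  have same_label: "merged_label ts (cs ! i) = merged_label ts (cs ! 0)" if "i < length cs" for i
    using that
  proof (induction i)
    case (Suc i)
    have "merged_label ts (cs ! Suc i) = merged_label ts (transp_prod ts (cs ! i))"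
      using cycle_of_list_nth[OF dist Suc.prems] ts(2) by simp
    then show ?case
      using Suc by (simp add: merged_label_transp_prod)
  qed simp
  have "merged_label ts ` set cs \<subseteq> {merged_label ts (cs ! 0)}"
    using same_label by (auto simp: in_set_conv_nth)
  then have "card (merged_label ts ` set cs) \<le> 1"
    using card_mono[of "{merged_label ts (cs ! 0)}"] by fastforce
  moreover have "card (set cs) \<le> card (merged_label ts ` set cs) + length ts"
    by (rule card_le_card_merged_label) simp
  ultimately show "length cs - 1 \<le> k"
    using ts(1) dist by (simp add: distinct_card)
qed

lemma tlen_is_cycle_len: "is_cycle_len k s \<Longrightarrow> tlen s + 1 = k"
  unfolding is_cycle_len_def by (auto simp: tlen_cycle_of_list Suc_le_eq)

section \<open>Cycle type and conjugacy in S_infinity\<close>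

definition prod_cycle_lists :: "nat list list \<Rightarrow> nat \<Rightarrow> nat" where
  "prod_cycle_lists L = foldr (\<lambda>c g. cycle_of_list c \<circ> g) L id"

lemma prod_cycle_lists_simps [simp]:
  "prod_cycle_lists [] = id"
  "prod_cycle_lists (c # L) = cycle_of_list c \<circ> prod_cycle_lists L"
  by (simp_all add: prod_cycle_lists_def)

definition disjoint_cycle_lists :: "nat list list \<Rightarrow> bool" where
  "disjoint_cycle_lists L \<longleftrightarrow> (\<forall>c\<in>set L. length c \<ge> 2) \<and> distinct (concat L)"

lemma disjoint_cycle_lists_Cons:
  "disjoint_cycle_lists (c # L) \<longleftrightarrow>
     length c \<ge> 2 \<and> distinct c \<and> set c \<inter> set (concat L) = {} \<and> disjoint_cycle_lists L"
  by (auto simp: disjoint_cycle_lists_def)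

lemma disjoint_cycle_lists_distinct: "disjoint_cycle_lists L \<Longrightarrow> c \<in> set L \<Longrightarrow> distinct c"
  by (auto simp: disjoint_cycle_lists_def distinct_concat_iff)

lemma disjoint_cycle_lists_imp_distinct: "disjoint_cycle_lists L \<Longrightarrow> distinct L"
proof (induction L)
  case (Cons c L)
  then have "c \<notin> set L"
    by (auto simp: disjoint_cycle_lists_Cons dest!: split_list)
  with Cons show ?case
    by (simp add: disjoint_cycle_lists_Cons)
qed simp

lemma cycle_of_list_in_set: "x \<in> set c \<Longrightarrow> cycle_of_list c x \<in> set c"
  using cycle_permutes[of c] by (simp add: permutes_in_image)

lemma prod_cycle_lists_outside: "\<forall>c\<in>set L. x \<notin> set c \<Longrightarrow> prod_cycle_lists L x = x"
  by (induction L) (auto simp: id_outside_supp)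

lemma prod_cycle_lists_on_cycle:
  "disjoint_cycle_lists L \<Longrightarrow> c \<in> set L \<Longrightarrow> x \<in> set c \<Longrightarrow> prod_cycle_lists L x = cycle_of_list c x"
proof (induction L)
  case (Cons c' L)
  show ?case
  proof (cases "c = c'")
    case True
    with Cons.prems have "\<forall>d\<in>set L. x \<notin> set d"
      by (auto simp: disjoint_cycle_lists_Cons)
    with True show ?thesis
      by (simp add: prod_cycle_lists_outside)
  next
    case False
    with Cons have "prod_cycle_lists L x = cycle_of_list c x"
      by (simp add: disjoint_cycle_lists_Cons)
    moreover have "cycle_of_list c x \<notin> set c'"
      using cycle_of_list_in_set[OF Cons.prems(3)] Cons.prems False
      by (auto simp: disjoint_cycle_lists_Cons)
    ultimately show ?thesis
      by (simp add: id_outside_supp)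
  qed
qed simp

lemma orbit_cycle_of_list:
  assumes dist: "distinct c" and x: "x \<in> set c"
  shows "orbit (cycle_of_list c) x = set c"
proof -
  obtain i where i: "i < length c" "x = c ! i"
    using x by (auto simp: in_set_conv_nth)
  have power: "(cycle_of_list c ^^ m) x = c ! ((m + i) mod length c)" for m
  proof -
    have "map (cycle_of_list c ^^ m) c = rotate m c"
      by (rule cyclic_rotation[OF dist])
    then show ?thesis
      using i by (metis nth_map nth_rotate)
  qed
  have "{(cycle_of_list c ^^ m) x | m. True} = set c"
  proof (intro equalityI subsetI)
    fix y assume "y \<in> {(cycle_of_list c ^^ m) x | m. True}"
    then show "y \<in> set c"
      using power i(1) by (auto intro!: nth_mem mod_less_divisor)
  next
    fix y assume "y \<in> set c"
    then obtain j where j: "j < length c" "y = c ! j"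
      by (auto simp: in_set_conv_nth)
    then have "(cycle_of_list c ^^ (length c - i + j)) x = y"
      using power i(1) by (simp add: add.commute[of _ i])
    then show "y \<in> {(cycle_of_list c ^^ m) x | m. True}"
      by blast
  qed
  then show ?thesis
    by (simp add: orbit_altdef_permutation[OF permutation_of_cycle])
qed

lemma orbit_prod_cycle_lists:
  assumes "disjoint_cycle_lists L"
  shows "c \<in> set L \<Longrightarrow> x \<in> set c \<Longrightarrow> orbit (prod_cycle_lists L) x = set c"
    and "\<forall>c\<in>set L. x \<notin> set c \<Longrightarrow> orbit (prod_cycle_lists L) x = {x}"
proof -
  assume c: "c \<in> set L" and x: "x \<in> set c"
  have "orbit (prod_cycle_lists L) x = orbit (cycle_of_list c) x"
    by (rule orbit_cong0[OF x]) (use cycle_of_list_in_set prod_cycle_lists_on_cycle[OF assms c] in auto)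
  then show "orbit (prod_cycle_lists L) x = set c"
    using orbit_cycle_of_list[OF disjoint_cycle_lists_distinct[OF assms c] x] by simp
next
  assume "\<forall>c\<in>set L. x \<notin> set c"
  then show "orbit (prod_cycle_lists L) x = {x}"
    using prod_cycle_lists_outside orbit_eq_singleton_iff by metis
qed

lemma num_cycles_prod_cycle_lists:
  assumes L: "disjoint_cycle_lists L" and k: "k \<ge> 2"
  shows "num_cycles (prod_cycle_lists L) k = count (mset (map length L)) k"
proof -
  have orbits: "{Orb. \<exists>x. Orb = orbit (prod_cycle_lists L) x \<and> card Orb = k} =
      set ` {c \<in> set L. length c = k}"
  proof (intro equalityI subsetI)
    fix Orb assume "Orb \<in> {Orb. \<exists>x. Orb = orbit (prod_cycle_lists L) x \<and> card Orb = k}"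
    then obtain x where x: "Orb = orbit (prod_cycle_lists L) x" "card Orb = k"
      by auto
    with k obtain c where "c \<in> set L" "x \<in> set c"
      using orbit_prod_cycle_lists(2)[OF L] by fastforce
    with x show "Orb \<in> set ` {c \<in> set L. length c = k}"
      using orbit_prod_cycle_lists(1)[OF L] disjoint_cycle_lists_distinct[OF L]
      by (auto simp: distinct_card)
  next
    fix Orb assume "Orb \<in> set ` {c \<in> set L. length c = k}"
    then obtain c where c: "c \<in> set L" "length c = k" "Orb = set c"
      by auto
    with k have "Orb = orbit (prod_cycle_lists L) (hd c)"
      using orbit_prod_cycle_lists(1)[OF L c(1)] by (cases c) auto
    with c show "Orb \<in> {Orb. \<exists>x. Orb = orbit (prod_cycle_lists L) x \<and> card Orb = k}"
      using disjoint_cycle_lists_distinct[OF L] by (auto simp: distinct_card)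
  qed
  have "inj_on set {c \<in> set L. length c = k}"
    using L k by (intro inj_onI) (fastforce simp: disjoint_cycle_lists_def distinct_concat_iff)
  then have "num_cycles (prod_cycle_lists L) k = card {c \<in> set L. length c = k}"
    unfolding num_cycles_def orbits by (rule card_image)
  also have "\<dots> = length (filter (\<lambda>c. length c = k) L)"
    using disjoint_cycle_lists_imp_distinct[OF L] by (metis distinct_filter distinct_card set_filter)
  also have "\<dots> = count (mset (map length L)) k"
    by (induction L) auto
  finally show ?thesis .
qed

lemma permutes_in_S_inf:
  assumes "f permutes A" "finite A"
  shows "f \<in> S_inf"
proof -
  obtain m where "A \<subseteq> {..<m}"
    using assms(2) finite_nat_iff_bounded by blast
  then show ?thesis
    using permutes_subset[OF assms(1)] by (auto simp: S_inf_def)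
qed

lemma id_in_S_inf: "id \<in> S_inf"
  unfolding S_inf_def using permutes_id by blast

lemma S_inf_comp: "f \<in> S_inf \<Longrightarrow> g \<in> S_inf \<Longrightarrow> f \<circ> g \<in> S_inf"
proof -
  assume "f \<in> S_inf" "g \<in> S_inf"
  then obtain m1 m2 where "f permutes {..<m1}" "g permutes {..<m2}"
    by (auto simp: S_inf_def)
  then have "f \<circ> g permutes {..<max m1 m2}"
    by (intro permutes_compose) (auto intro: permutes_subset)
  then show ?thesis
    by (auto simp: S_inf_def)
qed

lemma S_inf_inv: "f \<in> S_inf \<Longrightarrow> inv f \<in> S_inf"
  by (auto simp: S_inf_def intro: permutes_inv)

lemma S_inf_bij: "f \<in> S_inf \<Longrightarrow> bij f"
  by (auto simp: S_inf_def intro: permutes_bij)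

lemma transpose_in_S_inf: "Transposition.transpose a b \<in> S_inf"
  by (rule permutes_in_S_inf[OF permutes_swap_id[of a "{a, b}" b]]) auto

lemma prod_cycle_lists_in_S_inf: "prod_cycle_lists L \<in> S_inf"
proof (induction L)
  case (Cons c L)
  show ?case
    unfolding prod_cycle_lists_simps
    by (rule S_inf_comp[OF permutes_in_S_inf[OF cycle_permutes] Cons.IH]) simp
qed (simp only: prod_cycle_lists_simps id_in_S_inf)

definition nontrivial_cycles :: "nat list list \<Rightarrow> nat list list" where
  "nontrivial_cycles L = filter (\<lambda>c. length c \<ge> 2) L"

lemma prod_cycle_lists_nontrivial_cycles: "prod_cycle_lists (nontrivial_cycles L) = prod_cycle_lists L"
proof (induction L)
  case (Cons c L)
  have "length c < 2 \<Longrightarrow> cycle_of_list c = id"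
    by (cases c rule: cycle_of_list.cases) auto
  with Cons show ?case
    by (auto simp: nontrivial_cycles_def)
qed (simp add: nontrivial_cycles_def)

lemma count_lengths_nontrivial_cycles:
  "k \<ge> 2 \<Longrightarrow> count (mset (map length (nontrivial_cycles L))) k = count (mset (map length L)) k"
  by (induction L) (auto simp: nontrivial_cycles_def)

lemma disjoint_cycle_lists_nontrivial_cycles:
  "distinct (concat L) \<Longrightarrow> disjoint_cycle_lists (nontrivial_cycles L)"
  by (induction L) (auto simp: disjoint_cycle_lists_def nontrivial_cycles_def)

lemma S_inf_cycle_decomposition:
  assumes "s \<in> S_inf"
  obtains L where "disjoint_cycle_lists L" "s = prod_cycle_lists L"
proof -
  have "\<exists>L. distinct (concat L) \<and> set (concat L) = I \<and> p = prod_cycle_lists L"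
    if "cycle_decomp I p" for I p
    using that
  proof (induction rule: cycle_decomp.induct)
    case (comp I p cs)
    then obtain L where "distinct (concat L)" "set (concat L) = I" "p = prod_cycle_lists L"
      by blast
    with comp show ?case
      by (intro exI[of _ "cs # L"]) auto
  qed (auto intro: exI[of _ "[]"])
  moreover obtain m where "s permutes {..<m}"
    using assms by (auto simp: S_inf_def)
  ultimately obtain L where "distinct (concat L)" "s = prod_cycle_lists L"
    using cycle_decomposition[of s "{..<m}"] by blast
  then show ?thesis
    using that disjoint_cycle_lists_nontrivial_cycles prod_cycle_lists_nontrivial_cycles by metis
qed

lemma reorder_by_lengths:
  "mset (map length L1) = mset (map length L2) \<Longrightarrow>
     \<exists>L2'. mset L2' = mset L2 \<and> map length L2' = map length L1"
proof (induction L1 arbitrary: L2)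
  case (Cons c R)
  have "length c \<in># mset (map length L2)"
    using Cons.prems by (metis list.set_intros(1) list.simps(9) set_mset_mset)
  then obtain c2 where c2: "c2 \<in> set L2" "length c2 = length c"
    by auto
  have "mset (map length (remove1 c2 L2)) = mset (map length L2) - {#length c2#}"
    using c2(1) by (simp add: mset_remove1 image_mset_Diff)
  also have "\<dots> = mset (map length R)"
    using Cons.prems[symmetric] c2(2) by simp
  finally obtain R2 where "mset R2 = mset (remove1 c2 L2)" "map length R2 = map length R"
    using Cons.IH[OF sym] by blast
  with c2 show ?case
    by (intro exI[of _ "c2 # R2"]) (simp add: mset_remove1)
qed simp

lemma disjoint_cycle_lists_mset_eq:
  assumes "disjoint_cycle_lists L" "mset L' = mset L"
  shows "disjoint_cycle_lists L'"
proof -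
  have "mset (concat L') = mset (concat L)"
    by (simp add: mset_concat assms(2) sum_mset_sum_list[symmetric] mset_map)
  then have "distinct (concat L')"
    using assms(1) perm_distinct_iff by (auto simp: disjoint_cycle_lists_def)
  moreover have "set L' = set L"
    using assms(2) by (metis set_mset_mset)
  ultimately show ?thesis
    using assms(1) by (simp add: disjoint_cycle_lists_def)
qed

lemma prod_cycle_lists_eq_if_set_eq:
  assumes "disjoint_cycle_lists L" "disjoint_cycle_lists L'" "set L = set L'"
  shows "prod_cycle_lists L = prod_cycle_lists L'"
proof
  fix x
  show "prod_cycle_lists L x = prod_cycle_lists L' x"
  proof (cases "\<exists>c\<in>set L. x \<in> set c")
    case True
    then obtain c where "c \<in> set L" "x \<in> set c"
      by blast
    then show ?thesis
      using prod_cycle_lists_on_cycle[OF assms(1)] prod_cycle_lists_on_cycle[OF assms(2)] assms(3)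
      by simp
  next
    case False
    then show ?thesis
      using prod_cycle_lists_outside[of L x] prod_cycle_lists_outside[of L' x] assms(3) by simp
  qed
qed

lemma prod_cycle_lists_map_map:
  assumes g: "bij g" and "\<forall>c\<in>set L. distinct c"
  shows "prod_cycle_lists (map (map g) L) = g \<circ> prod_cycle_lists L \<circ> inv g"
  using assms(2)
proof (induction L)
  case Nil
  then show ?case
    using g by (simp add: fun_eq_iff bij_is_surj surj_f_inv_f)
next
  case (Cons c L)
  then have "prod_cycle_lists (map (map g) (c # L)) =
      (g \<circ> cycle_of_list c \<circ> inv g) \<circ> (g \<circ> prod_cycle_lists L \<circ> inv g)"
    using conjugation_of_cycle[OF _ g, of c] by (simp add: comp_def)
  also have "\<dots> = g \<circ> cycle_of_list c \<circ> (inv g \<circ> g) \<circ> prod_cycle_lists L \<circ> inv g"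
    by (simp add: o_assoc)
  finally show ?case
    using g by (simp add: bij_is_inj o_assoc)
qed

lemma map_map_eq_if_map_concat_eq:
  "map length A = map length B \<Longrightarrow> map g (concat A) = concat B \<Longrightarrow> map (map g) A = B"
proof (induction A arbitrary: B)
  case (Cons a A)
  then obtain b B' where "B = b # B'" "length a = length b" "map length A = map length B'"
    by (cases B) auto
  with Cons show ?case
    by (auto simp: append_eq_append_conv)
qed simp

lemma S_inf_map_onto:
  "distinct xs \<Longrightarrow> distinct ys \<Longrightarrow> length xs = length ys \<Longrightarrow> \<exists>g\<in>S_inf. map g xs = ys"
proof (induction xs arbitrary: ys)
  case Nil
  then show ?case
    using id_in_S_inf by auto
next
  case (Cons x xs)
  then obtain y ys' where ys: "ys = y # ys'"
    by (cases ys) auto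
  with Cons obtain g0 where g0: "g0 \<in> S_inf" "map g0 xs = ys'"
    by auto
  define g where "g = Transposition.transpose y (g0 x) \<circ> g0"
  have "g0 x \<notin> set ys'"
    using Cons.prems(1) g0 S_inf_bij[OF g0(1)] by (auto simp: bij_is_inj inj_eq)
  moreover have "y \<notin> set ys'"
    using Cons.prems(2) ys by simp
  ultimately have "map (Transposition.transpose y (g0 x)) ys' = ys'"
    by (intro map_idI) (auto simp: Transposition.transpose_def)
  moreover have "map g xs = map (Transposition.transpose y (g0 x)) (map g0 xs)"
    by (simp add: g_def)
  ultimately have "map g (x # xs) = y # ys'"
    using g0(2) by (simp add: g_def)
  then have "map g (x # xs) = ys"
    using ys by simp
  moreover have "g \<in> S_inf"
    unfolding g_def by (intro S_inf_comp transpose_in_S_inf g0(1))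
  ultimately show ?case
    by blast
qed

lemma conjugate_prod_cycle_lists:
  assumes L1: "disjoint_cycle_lists L1" and L2: "disjoint_cycle_lists L2"
    and lengths: "mset (map length L1) = mset (map length L2)"
  shows "conjugate (prod_cycle_lists L1) (prod_cycle_lists L2)"
proof -
  obtain L2' where L2': "mset L2' = mset L2" "map length L2' = map length L1"
    using reorder_by_lengths[OF lengths] by blast
  have L2'_disj: "disjoint_cycle_lists L2'"
    using disjoint_cycle_lists_mset_eq[OF L2 L2'(1)] .
  have "prod_cycle_lists L2' = prod_cycle_lists L2"
    using prod_cycle_lists_eq_if_set_eq[OF L2'_disj L2] L2'(1) by (metis set_mset_mset)
  moreover have "length (concat L2') = length (concat L1)"
    using L2'(2) by (simp add: length_concat)
  then obtain g where g: "g \<in> S_inf" "map g (concat L2') = concat L1"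
    using S_inf_map_onto[of "concat L2'" "concat L1"] L1 L2'_disj
    unfolding disjoint_cycle_lists_def by blast
  then have "prod_cycle_lists L1 = g \<circ> prod_cycle_lists L2' \<circ> inv g"
    using map_map_eq_if_map_concat_eq[OF L2'(2)] prod_cycle_lists_map_map[OF S_inf_bij]
      disjoint_cycle_lists_distinct[OF L2'_disj] by metis
  ultimately show ?thesis
    using g(1) by (auto simp: conjugate_def)
qed

lemma conjugate_if_num_cycles_eq:
  assumes "s \<in> S_inf" "s' \<in> S_inf" "\<forall>k\<ge>2. num_cycles s k = num_cycles s' k"
  shows "conjugate s s'"
proof -
  obtain L1 where L1: "disjoint_cycle_lists L1" "s = prod_cycle_lists L1"
    using S_inf_cycle_decomposition[OF assms(1)] .
  obtain L2 where L2: "disjoint_cycle_lists L2" "s' = prod_cycle_lists L2"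
    using S_inf_cycle_decomposition[OF assms(2)] .
  have "count (mset (map length L1)) k = count (mset (map length L2)) k" for k
  proof (cases "k \<ge> 2")
    case True
    then show ?thesis
      using assms(3) num_cycles_prod_cycle_lists L1 L2 by metis
  next
    case False
    then have "count (mset (map length L)) k = 0" if "disjoint_cycle_lists L" for L
      using that by (auto simp: disjoint_cycle_lists_def count_eq_zero_iff)
    then show ?thesis
      using L1(1) L2(1) by simp
  qed
  then show ?thesis
    using conjugate_prod_cycle_lists[OF L1(1) L2(1)] L1(2) L2(2) by (simp add: multiset_eqI)
qed

lemma conjugate_sym: "conjugate s t \<Longrightarrow> conjugate t s"
proof -
  assume "conjugate s t"
  then obtain g where g: "g \<in> S_inf" "s = g \<circ> t \<circ> inv g"
    by (auto simp: conjugate_def)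
  have bij: "bij g"
    using S_inf_bij[OF g(1)] .
  have "inv g \<circ> s \<circ> inv (inv g) = (inv g \<circ> g) \<circ> t \<circ> (inv g \<circ> g)"
    using g(2) bij by (simp add: inv_inv_eq o_assoc)
  then have "t = inv g \<circ> s \<circ> inv (inv g)"
    using bij by (simp add: bij_is_inj)
  then show ?thesis
    using S_inf_inv[OF g(1)] by (auto simp: conjugate_def)
qed

lemma conjugate_trans: "conjugate s t \<Longrightarrow> conjugate t u \<Longrightarrow> conjugate s u"
proof -
  assume "conjugate s t" "conjugate t u"
  then obtain g h where gh: "g \<in> S_inf" "s = g \<circ> t \<circ> inv g" "h \<in> S_inf" "t = h \<circ> u \<circ> inv h"
    by (auto simp: conjugate_def)
  then have "s = (g \<circ> h) \<circ> u \<circ> inv (g \<circ> h)"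
    using S_inf_bij[OF gh(1)] S_inf_bij[OF gh(3)] by (simp add: o_inv_distrib o_assoc)
  then show ?thesis
    using gh S_inf_comp by (auto simp: conjugate_def)
qed

lemma Mrho_conjugate: "conjugate s s' \<Longrightarrow> Mrho n rho s = Mrho n rho s'"
proof -
  assume "conjugate s s'"
  then have "conjugate s = conjugate s'"
    using conjugate_sym conjugate_trans by blast
  then show ?thesis
    unfolding Mrho_def by (simp only:)
qed

section \<open>Derivatives at zero of products, powers and logarithms\<close>

definition mfact :: "nat multiset \<Rightarrow> real" where
  "mfact a = (\<Prod>k\<in>set_mset a. fact (count a k))"

definition labels :: "(nat \<Rightarrow> nat) \<Rightarrow> nat set \<Rightarrow> nat multiset" where
  "labels h S = image_mset h (mset_set S)"

text \<open>The derivative at 0 in the variables x_(h i), i \<in> S. Indexing the differentiations by a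
  set rather than a list turns the Leibniz rule into a sum over subsets.\<close>
definition deriv0_on :: "mps \<Rightarrow> (nat \<Rightarrow> nat) \<Rightarrow> nat set \<Rightarrow> real" where
  "deriv0_on F h S = mfact (labels h S) * F (labels h S)"

lemma labels_nth: "labels (nth js) {..<length js} = mset js"
  unfolding labels_def mset_set_upto_eq_mset_upto by (metis mset_map map_nth)

lemma deriv0_eq_deriv0_on: "deriv0 F js = deriv0_on F (nth js) {..<length js}"
  by (simp add: deriv0_def deriv0_on_def mfact_def labels_nth)

lemma labels_insert: "finite S \<Longrightarrow> x \<notin> S \<Longrightarrow> labels h (insert x S) = add_mset (h x) (labels h S)"
  by (simp add: labels_def)

lemma labels_mono: "finite S \<Longrightarrow> B \<subseteq> S \<Longrightarrow> labels h B \<subseteq># labels h S"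
  unfolding labels_def by (intro image_mset_subseteq_mono) (simp add: subset_imp_msubset_mset_set)

lemma labels_Diff: "finite S \<Longrightarrow> B \<subseteq> S \<Longrightarrow> labels h (S - B) = labels h S - labels h B"
  unfolding labels_def by (simp add: mset_set_Diff image_mset_Diff subset_imp_msubset_mset_set)

lemma labels_empty_iff: "finite S \<Longrightarrow> labels h S = {#} \<longleftrightarrow> S = {}"
  by (simp add: labels_def mset_set_empty_iff)

lemma size_labels: "size (labels h S) = card S"
  by (simp add: labels_def)

lemma mfact_pos: "mfact a > 0"
  by (simp add: mfact_def prod_pos)

lemma mfact_add_mset: "mfact (add_mset k c) = mfact c * (real (count c k) + 1)"
proof -
  have superset: "mfact a = (\<Prod>j\<in>insert k (set_mset c). fact (count a j))"
    if "set_mset a \<subseteq> insert k (set_mset c)" for a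
    unfolding mfact_def using that by (intro prod.mono_neutral_left) (auto simp: not_in_iff)
  have "mfact (add_mset k c) = fact (Suc (count c k)) * (\<Prod>j\<in>set_mset c - {k}. fact (count c j))"
    by (subst superset) (auto simp: prod.insert_remove intro!: prod.cong)
  moreover have "mfact c = fact (count c k) * (\<Prod>j\<in>set_mset c - {k}. fact (count c j))"
    by (subst superset) (auto simp: prod.insert_remove)
  ultimately show ?thesis
    by (simp add: algebra_simps)
qed

definition labelled_subsets :: "(nat \<Rightarrow> nat) \<Rightarrow> nat set \<Rightarrow> nat multiset \<Rightarrow> nat set set" where
  "labelled_subsets h S b = {B. B \<subseteq> S \<and> labels h B = b}"

lemma labelled_subsets_insert:
  assumes S: "finite S" "x \<notin> S"
  shows "labelled_subsets h (insert x S) b = labelled_subsets h S b \<union>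
    (if h x \<in># b then insert x ` labelled_subsets h S (b - {#h x#}) else {})"
proof (intro equalityI subsetI)
  fix B assume "B \<in> labelled_subsets h (insert x S) b"
  then have B: "B \<subseteq> insert x S" "labels h B = b"
    by (auto simp: labelled_subsets_def)
  show "B \<in> labelled_subsets h S b \<union>
      (if h x \<in># b then insert x ` labelled_subsets h S (b - {#h x#}) else {})"
  proof (cases "x \<in> B")
    case True
    have "B - {x} \<subseteq> S" "finite (B - {x})"
      using B(1) S(1) finite_subset by blast+
    moreover have "b = add_mset (h x) (labels h (B - {x}))"
      using B(2) True labels_insert[of "B - {x}" x h] calculation(2) by (simp add: insert_absorb)
    ultimately show ?thesis
      using True by (auto simp: labelled_subsets_def image_iff intro!: bexI[of _ "B - {x}"])
  next
    case False
    then show ?thesis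
      using B by (auto simp: labelled_subsets_def)
  qed
next
  fix B assume "B \<in> labelled_subsets h S b \<union>
      (if h x \<in># b then insert x ` labelled_subsets h S (b - {#h x#}) else {})"
  then consider "B \<in> labelled_subsets h S b"
    | B' where "h x \<in># b" "B = insert x B'" "B' \<in> labelled_subsets h S (b - {#h x#})"
    by (auto split: if_splits)
  then show "B \<in> labelled_subsets h (insert x S) b"
  proof cases
    case 2
    then have "x \<notin> B'" "finite B'"
      using S by (auto simp: labelled_subsets_def intro: finite_subset)
    then show ?thesis
      using 2 labels_insert[of B' x h] by (auto simp: labelled_subsets_def)
  qed (auto simp: labelled_subsets_def)
qed

lemma card_labelled_subsets_insert:
  assumes S: "finite S" "x \<notin> S"
  shows "card (labelled_subsets h (insert x S) b) = card (labelled_subsets h S b) +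
    (if h x \<in># b then card (labelled_subsets h S (b - {#h x#})) else 0)"
proof -
  have fin: "finite (labelled_subsets h S c)" for c
    using S(1) by (auto simp: labelled_subsets_def intro: finite_subset[of _ "Pow S"])
  have "inj_on (insert x) (labelled_subsets h S c)" for c
    using S(2) by (intro inj_onI) (auto simp: labelled_subsets_def insert_ident)
  moreover have "labelled_subsets h S b \<inter> insert x ` labelled_subsets h S c = {}" for c
    using S(2) by (auto simp: labelled_subsets_def)
  ultimately show ?thesis
    unfolding labelled_subsets_insert[OF S] using fin by (simp add: card_Un_disjoint card_image)
qed

text \<open>In the inductive step below N c is the number of subsets of S labelled c, and this is the
  contribution of the subsets avoiding the new point.\<close>
lemma mfact_identity_add_mset:
  fixes N :: "nat multiset \<Rightarrow> nat"
  assumes N: "\<And>c. real (N c) * mfact c * mfact (a - c) = (if c \<subseteq># a then mfact a else 0)"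
    and b: "b \<subseteq># add_mset k a"
  shows "real (N b) * mfact b * mfact (add_mset k a - b) =
    mfact a * (real (count a k) + 1 - real (count b k))"
proof (cases "b \<subseteq># a")
  case True
  then have "add_mset k a - b = add_mset k (a - b)"
    by (metis add_mset_add_single mset_subset_eq_multiset_union_diff_commute)
  then have "real (N b) * mfact b * mfact (add_mset k a - b) =
      real (N b) * mfact b * mfact (a - b) * (real (count (a - b) k) + 1)"
    by (simp add: mfact_add_mset)
  moreover have "count b k \<le> count a k"
    using True by (simp add: subseteq_mset_def)
  ultimately show ?thesis
    using N[of b] True by (simp add: of_nat_diff)
next
  case False
  then obtain j where j: "count b j > count a j"
    by (meson leI subseteq_mset_def)
  moreover have "count b j \<le> count (add_mset k a) j" "count b k \<le> Suc (count a k)"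
    using b by (metis count_add_mset subseteq_mset_def)+
  ultimately have "count b k = count a k + 1"
    by (auto split: if_splits)
  moreover have "N b = 0"
    using N[of b] False mfact_pos[of b] mfact_pos[of "a - b"] by simp
  ultimately show ?thesis
    by simp
qed

text \<open>For b \<subseteq># labels h S this is the multinomial count of the subsets of S labelled b.\<close>
lemma card_labelled_subsets_mfact:
  assumes "finite S"
  shows "real (card (labelled_subsets h S b)) * mfact b * mfact (labels h S - b) =
    (if b \<subseteq># labels h S then mfact (labels h S) else 0)"
  using assms
proof (induction S arbitrary: b rule: finite_induct)
  case empty
  have "labelled_subsets h {} b = (if b = {#} then {{}} else {})"
    by (auto simp: labelled_subsets_def labels_def)
  then show ?case
    by (simp add: labels_def mfact_def)
next
  case (insert x S)
  let ?N = "\<lambda>c. card (labelled_subsets h S c)" and ?a = "labels h S" and ?k = "h x"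
  have labels_ins: "labels h (insert x S) = add_mset ?k ?a"
    using insert.hyps by (rule labels_insert)
  show ?case
  proof (cases "b \<subseteq># add_mset ?k ?a")
    case False
    have "labels h B \<subseteq># add_mset ?k ?a" if "B \<subseteq> insert x S" for B
      using labels_mono[of "insert x S" B h] insert.hyps(1) labels_ins that by simp
    with False have "labelled_subsets h (insert x S) b = {}"
      by (auto simp: labelled_subsets_def)
    then show ?thesis
      using False labels_ins by simp
  next
    case b: True
    note first_term = mfact_identity_add_mset[of ?N ?a, OF insert.IH b]
    show ?thesis
    proof (cases "?k \<in># b")
      case False
      moreover have "count b ?k = 0"
        using False by (simp add: not_in_iff)
      ultimately show ?thesis
        using first_term b
        by (simp add: card_labelled_subsets_insert insert.hyps labels_ins mfact_add_mset)
    next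
      case True
      define b' where "b' = b - {#?k#}"
      then have b_eq: "b = add_mset ?k b'"
        using True by simp
      then have "b' \<subseteq># ?a" "add_mset ?k ?a - b = ?a - b'"
        using b by simp_all
      then have "real (?N b') * mfact b * mfact (add_mset ?k ?a - b) = mfact ?a * real (count b ?k)"
        using insert.IH[of b'] b_eq by (simp add: mfact_add_mset algebra_simps)
      then show ?thesis
        using first_term b True
        by (simp add: card_labelled_subsets_insert insert.hyps labels_ins b'_def[symmetric]
            mfact_add_mset algebra_simps)
    qed
  qed
qed

lemma finite_sub_msets: "finite {b. b \<subseteq># (a :: 'a multiset)}"
proof (rule finite_subset)
  show "{b. b \<subseteq># a} \<subseteq> (\<Union>m\<in>{..size a}. multisets_of_size (set_mset a) m)"
    by (auto simp: multisets_of_size_def size_mset_mono mset_subset_eqD)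
qed auto

lemma deriv0_on_mps_mult:
  assumes S: "finite S"
  shows "deriv0_on (mps_mult F G) h S = (\<Sum>B\<in>Pow S. deriv0_on F h B * deriv0_on G h (S - B))"
proof -
  define a where "a = labels h S"
  define g where "g b = mfact b * F b * (mfact (a - b) * G (a - b))" for b
  have "deriv0_on (mps_mult F G) h S = (\<Sum>b\<in>{b. b \<subseteq># a}. mfact a * (F b * G (a - b)))"
    by (simp add: deriv0_on_def mps_mult_def a_def sum_distrib_left)
  also have "\<dots> = (\<Sum>b\<in>{b. b \<subseteq># a}. real (card (labelled_subsets h S b)) * g b)"
  proof (intro sum.cong refl)
    fix b assume "b \<in> {b. b \<subseteq># a}"
    then have "real (card (labelled_subsets h S b)) * mfact b * mfact (a - b) = mfact a"
      using card_labelled_subsets_mfact[OF S, of h b] by (simp add: a_def)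
    then show "mfact a * (F b * G (a - b)) = real (card (labelled_subsets h S b)) * g b"
      unfolding g_def by (metis (no_types, lifting) mult.assoc mult.left_commute)
  qed
  also have "\<dots> = (\<Sum>b\<in>{b. b \<subseteq># a}. \<Sum>B\<in>{B \<in> Pow S. labels h B = b}. g (labels h B))"
    by (intro sum.cong) (auto simp: labelled_subsets_def Pow_def)
  also have "\<dots> = (\<Sum>B\<in>Pow S. g (labels h B))"
    using S finite_sub_msets labels_mono[OF S] by (intro sum.group) (auto simp: a_def)
  also have "\<dots> = (\<Sum>B\<in>Pow S. deriv0_on F h B * deriv0_on G h (S - B))"
    using labels_Diff[OF S] by (intro sum.cong) (auto simp: g_def deriv0_on_def a_def)
  finally show ?thesis .
qed

definition partition_sum :: "('a set \<Rightarrow> 'b :: comm_semiring_1) \<Rightarrow> nat \<Rightarrow> 'a set \<Rightarrow> 'b" where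
  "partition_sum f m S = (\<Sum>P\<in>{P. partition_on S P \<and> card P = m}. \<Prod>B\<in>P. f B)"

lemma partition_sum_0: "finite S \<Longrightarrow> partition_sum f 0 S = (if S = {} then 1 else 0)"
proof -
  assume S: "finite S"
  have "{P. partition_on S P \<and> card P = 0} = (if S = {} then {{}} else {})"
    using finite_elements[OF S] by (auto simp: partition_on_empty partition_on_def)
  then show ?thesis
    by (simp add: partition_sum_def)
qed

lemma partition_on_Diff_block:
  assumes "partition_on S P" "B \<in> P"
  shows "partition_on (S - B) (P - {B})"
proof -
  have "disjnt B (\<Union>(P - {B}))"
    using assms partition_onD2[OF assms(1)] by (auto simp: disjnt_def pairwise_def disjoint_def)
  moreover have "insert B (P - {B}) = P"
    using assms(2) by auto
  ultimately show ?thesis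
    using partition_on_insert[of B "P - {B}" S] assms(1) by simp
qed

lemma partition_on_insert_block:
  assumes "partition_on (S - B) P" "B \<subseteq> S" "B \<noteq> {}"
  shows "partition_on S (insert B P)" "B \<notin> P"
proof -
  have "disjnt B (\<Union>P)"
    using partition_onD1[OF assms(1)] by (auto simp: disjnt_def)
  then show "partition_on S (insert B P)"
    using partition_on_insert assms by blast
  show "B \<notin> P"
    using partition_onD1[OF assms(1)] assms(2,3) by blast
qed

lemma bij_betw_remove_block:
  assumes S: "finite S"
  shows "bij_betw (\<lambda>(P, B). (B, P - {B}))
    (SIGMA P:{P. partition_on S P \<and> card P = Suc m}. P)
    (SIGMA B:Pow S - {{}}. {Q. partition_on (S - B) Q \<and> card Q = m})"
    (is "bij_betw ?f ?A ?A'")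
proof (rule bij_betw_byWitness[where f' = "\<lambda>(B, Q). (insert B Q, B)"])
  show "\<forall>a'\<in>?A'. ?f ((\<lambda>(B, Q). (insert B Q, B)) a') = a'"
  proof
    fix a' assume "a' \<in> ?A'"
    then obtain B Q where "a' = (B, Q)" "B \<subseteq> S" "B \<noteq> {}" "partition_on (S - B) Q"
      by blast
    then show "?f ((\<lambda>(B, Q). (insert B Q, B)) a') = a'"
      using partition_on_insert_block(2) by auto
  qed
  show "?f ` ?A \<subseteq> ?A'"
  proof
    fix y assume "y \<in> ?f ` ?A"
    then obtain P B where y: "y = (B, P - {B})" "partition_on S P" "card P = Suc m" "B \<in> P"
      by auto
    then have "B \<subseteq> S" "B \<noteq> {}" "card (P - {B}) = m"
      using finite_elements[OF S y(2)] by (auto simp: partition_on_def)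
    then show "y \<in> ?A'"
      using partition_on_Diff_block[OF y(2,4)] y(1) by auto
  qed
  show "(\<lambda>(B, Q). (insert B Q, B)) ` ?A' \<subseteq> ?A"
  proof
    fix y assume "y \<in> (\<lambda>(B, Q). (insert B Q, B)) ` ?A'"
    then obtain B Q where y: "y = (insert B Q, B)" "B \<subseteq> S" "B \<noteq> {}"
        "partition_on (S - B) Q" "card Q = m"
      by auto
    moreover have "finite Q"
      using finite_elements[OF _ y(4)] S by auto
    ultimately show "y \<in> ?A"
      using partition_on_insert_block[OF y(4,2,3)] by auto
  qed
qed auto

lemma partition_sum_Suc:
  assumes S: "finite S"
  shows "(\<Sum>B\<in>Pow S - {{}}. f B * partition_sum f m (S - B)) = of_nat (Suc m) * partition_sum f (Suc m) S"
proof -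
  let ?Parts = "\<lambda>m S. {P. partition_on S P \<and> card P = m}"
  have fin_parts: "finite (?Parts m S)" if "finite S" for m and S :: "'a set"
    using finitely_many_partition_on[OF that] by (rule finite_subset[rotated]) auto
  have fin_blocks: "finite P" if "P \<in> ?Parts (Suc m) S" for P
    using that finite_elements[OF S] by auto
  have "(\<Sum>B\<in>Pow S - {{}}. f B * partition_sum f m (S - B)) =
      (\<Sum>B\<in>Pow S - {{}}. \<Sum>Q\<in>?Parts m (S - B). f B * prod f Q)"
    by (simp add: partition_sum_def sum_distrib_left)
  also have "\<dots> = (\<Sum>(B, Q)\<in>(SIGMA B:Pow S - {{}}. ?Parts m (S - B)). f B * prod f Q)"
    using S fin_parts by (intro sum.Sigma) auto
  also have "\<dots> = (\<Sum>(P, B)\<in>(SIGMA P:?Parts (Suc m) S. P). f B * prod f (P - {B}))"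
    using sum.reindex_bij_betw[OF bij_betw_remove_block[OF S], of "\<lambda>(B, Q). f B * prod f Q"]
    by (simp add: case_prod_beta')
  also have "\<dots> = (\<Sum>P\<in>?Parts (Suc m) S. \<Sum>B\<in>P. f B * prod f (P - {B}))"
    by (rule sum.Sigma[symmetric]) (use fin_parts[OF S] fin_blocks in blast)+
  also have "\<dots> = (\<Sum>P\<in>?Parts (Suc m) S. of_nat (Suc m) * prod f P)"
  proof (intro sum.cong refl)
    fix P assume P: "P \<in> ?Parts (Suc m) S"
    have "f B * prod f (P - {B}) = prod f P" if "B \<in> P" for B
      using fin_blocks[OF P] that by (simp add: prod.remove)
    then have "(\<Sum>B\<in>P. f B * prod f (P - {B})) = (\<Sum>B\<in>P. prod f P)"
      by simp
    then show "(\<Sum>B\<in>P. f B * prod f (P - {B})) = of_nat (Suc m) * prod f P"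
      using P by simp
  qed
  also have "\<dots> = of_nat (Suc m) * partition_sum f (Suc m) S"
    by (simp add: partition_sum_def sum_distrib_left)
  finally show ?thesis .
qed

lemma deriv0_on_mps_pow:
  assumes S: "finite S" and U: "U {#} = 0"
  shows "deriv0_on (mps_pow U m) h S = fact m * partition_sum (deriv0_on U h) m S"
  using S
proof (induction m arbitrary: S)
  case 0
  then show ?case
    by (simp add: deriv0_on_def partition_sum_0 labels_empty_iff) (simp add: labels_def mfact_def)
next
  case (Suc m)
  have "deriv0_on (mps_pow U (Suc m)) h S =
      (\<Sum>B\<in>Pow S. deriv0_on U h B * deriv0_on (mps_pow U m) h (S - B))"
    by (simp add: deriv0_on_mps_mult[OF Suc.prems])
  also have "\<dots> = (\<Sum>B\<in>Pow S - {{}}. deriv0_on U h B * deriv0_on (mps_pow U m) h (S - B))"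
    using Suc.prems U by (intro sum.mono_neutral_right) (auto simp: deriv0_on_def labels_def)
  also have "\<dots> = fact m * (\<Sum>B\<in>Pow S - {{}}. deriv0_on U h B * partition_sum (deriv0_on U h) m (S - B))"
    by (simp add: Suc.IH Suc.prems sum_distrib_left algebra_simps)
  also have "\<dots> = fact (Suc m) * partition_sum (deriv0_on U h) (Suc m) S"
    by (simp add: partition_sum_Suc[OF Suc.prems])
  finally show ?case .
qed

lemma card_partition_on_le:
  assumes S: "finite S" and P: "partition_on S P"
  shows "card P \<le> card S"
proof -
  have "card P = (\<Sum>B\<in>P. 1)"
    by simp
  also have "\<dots> \<le> (\<Sum>B\<in>P. card B)"
  proof (intro sum_mono)
    fix B assume "B \<in> P"
    then have "B \<noteq> {}" "finite B"
      using partition_onD3[OF P] partition_onD1[OF P] S by (auto intro: finite_subset)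
    then show "1 \<le> card B"
      by (simp add: Suc_leI card_gt_0_iff)
  qed
  also have "\<dots> = card S"
    using partition_onD1[OF P] partition_onD2[OF P] S
    by (metis Union_upper card_Union_disjoint finite_subset)
  finally show ?thesis .
qed

lemma card_partition_on_pos: "finite S \<Longrightarrow> partition_on S P \<Longrightarrow> S \<noteq> {} \<Longrightarrow> card P > 0"
  using finite_elements partition_onD1 by (fastforce simp: card_gt_0_iff)

text \<open>Moments to cumulants: the logarithm turns derivatives of A into sums over set partitions
  with the Moebius weights (-1)^(m-1) (m-1)! of the partition lattice.\<close>
lemma deriv0_on_mps_ln:
  assumes S: "finite S" "S \<noteq> {}"
  shows "deriv0_on (mps_ln A) h S = (\<Sum>P\<in>{P. partition_on S P}.
    (-1) ^ (card P - 1) * fact (card P - 1) * (\<Prod>B\<in>P. deriv0_on A h B))"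
proof -
  define U where "U = (\<lambda>b. if b = {#} then 0 else A b)"
  have U_A: "deriv0_on U h B = deriv0_on A h B" if "B \<subseteq> S" "B \<noteq> {}" for B
    using that S(1) labels_empty_iff[of B h] finite_subset by (auto simp: deriv0_on_def U_def)
  have parts_U_A: "partition_sum (deriv0_on U h) m S = partition_sum (deriv0_on A h) m S" for m
    unfolding partition_sum_def using U_A by (intro sum.cong prod.cong) (auto simp: partition_on_def)
  have "deriv0_on (mps_ln A) h S =
      (\<Sum>m\<in>{1..card S}. (-1) ^ (m - 1) / real m * deriv0_on (mps_pow U m) h S)"
    by (simp add: mps_ln_def Let_def U_def[symmetric] deriv0_on_def size_labels sum_distrib_left
        algebra_simps)
  also have "\<dots> = (\<Sum>m\<in>{1..card S}. (-1) ^ (m - 1) * fact (m - 1) * partition_sum (deriv0_on A h) m S)"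
  proof (intro sum.cong refl)
    fix m assume "m \<in> {1..card S}"
    then have "fact m = real m * fact (m - 1)"
      by (simp add: fact_reduce)
    then show "(-1) ^ (m - 1) / real m * deriv0_on (mps_pow U m) h S =
        (-1) ^ (m - 1) * fact (m - 1) * partition_sum (deriv0_on A h) m S"
      using \<open>m \<in> {1..card S}\<close>
      by (simp add: deriv0_on_mps_pow[OF S(1)] U_def parts_U_A[unfolded U_def])
  qed
  also have "\<dots> = (\<Sum>m\<in>{1..card S}. \<Sum>P\<in>{P \<in> {P. partition_on S P}. card P = m}.
      (-1) ^ (card P - 1) * fact (card P - 1) * (\<Prod>B\<in>P. deriv0_on A h B))"
    by (simp add: partition_sum_def sum_distrib_left conj_commute)
  also have "\<dots> = (\<Sum>P\<in>{P. partition_on S P}.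
      (-1) ^ (card P - 1) * fact (card P - 1) * (\<Prod>B\<in>P. deriv0_on A h B))"
    using finitely_many_partition_on[OF S(1)] card_partition_on_le[OF S(1)]
      card_partition_on_pos[OF S(1) _ S(2)]
    by (intro sum.group) (auto simp: Suc_le_eq)
  finally show ?thesis .
qed

section \<open>The Young generating function at disjoint cycles\<close>

lemma sum_labels_count:
  assumes B: "finite B"
  shows "(\<Sum>k\<in>set_mset (labels h B). count (labels h B) k * f k) = (\<Sum>i\<in>B. f (h i))"
proof -
  have "(\<Sum>k\<in>set_mset (labels h B). count (labels h B) k * f k) =
      (\<Sum>k\<in>h ` B. \<Sum>i\<in>{i \<in> B. h i = k}. f (h i))"
  proof (rule sum.cong)
    show "set_mset (labels h B) = h ` B"
      using B by (simp add: labels_def)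
    fix k
    have "(\<Sum>i\<in>{i \<in> B. h i = k}. f (h i)) = (\<Sum>i\<in>{i \<in> B. h i = k}. f k)"
      by (rule sum.cong) auto
    then show "count (labels h B) k * f k = (\<Sum>i\<in>{i \<in> B. h i = k}. f (h i))"
      using B by (simp add: labels_def count_image_mset_eq_card_vimage)
  qed
  also have "\<dots> = (\<Sum>i\<in>B. f (h i))"
    using B by (intro sum.group) auto
  finally show ?thesis .
qed

lemma deriv0_on_young_gf:
  assumes B: "finite B" "\<forall>i\<in>B. h i \<ge> 1" and n: "n > 0"
    and L: "disjoint_cycle_lists L" "\<forall>k\<ge>2. count (mset (map length L)) k = count (labels h B) k"
  shows "deriv0_on (young_gf n rho) h B =
    Mrho n rho (prod_cycle_lists L) * real n powr (real (\<Sum>i\<in>B. h i - 1) / 2)"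
proof -
  define a where "a = labels h B"
  define P where "P s \<longleftrightarrow> s \<in> S_inf \<and> (\<forall>k\<ge>2. num_cycles s k = count a k)" for s
  have P_L: "P (prod_cycle_lists L)"
    unfolding P_def using prod_cycle_lists_in_S_inf num_cycles_prod_cycle_lists[OF L(1)] L(2)
    by (simp add: a_def)
  then have "P (SOME s. P s)"
    using someI by metis
  with P_L have "conjugate (SOME s. P s) (prod_cycle_lists L)"
    unfolding P_def by (intro conjugate_if_num_cycles_eq) auto
  moreover have "0 \<notin># a"
    using B by (auto simp: a_def labels_def)
  ultimately have "young_gf n rho a = Mrho n rho (prod_cycle_lists L) *
      (\<Prod>k\<in>set_mset a. real n powr (real (count a k * (k - 1)) / 2) / fact (count a k))"
    by (simp add: young_gf_def P_def Mrho_conjugate)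
  then have "deriv0_on (young_gf n rho) h B = Mrho n rho (prod_cycle_lists L) *
      (\<Prod>k\<in>set_mset a. real n powr (real (count a k * (k - 1)) / 2))"
    by (simp add: deriv0_on_def a_def[symmetric] mfact_def prod.distrib[symmetric])
  also have "(\<Prod>k\<in>set_mset a. real n powr (real (count a k * (k - 1)) / 2)) =
      real n powr (real (\<Sum>k\<in>set_mset a. count a k * (k - 1)) / 2)"
    using n by (simp add: powr_sum sum_divide_distrib)
  also have "(\<Sum>k\<in>set_mset a. count a k * (k - 1)) = (\<Sum>i\<in>B. h i - 1)"
    unfolding a_def by (rule sum_labels_count[OF B(1)])
  finally show ?thesis .
qed

definition disjoint_cycles :: "(nat \<Rightarrow> nat) list \<Rightarrow> bool" where
  "disjoint_cycles ss \<longleftrightarrow> (\<forall>s\<in>set ss. \<exists>k. is_cycle_len k s) \<and>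
     (\<forall>i<length ss. \<forall>j<length ss. i \<noteq> j \<longrightarrow> supp (ss ! i) \<inter> supp (ss ! j) = {})"

lemma disjoint_cycles_Cons:
  "disjoint_cycles (s # ss) \<longleftrightarrow>
     (\<exists>k. is_cycle_len k s) \<and> (\<forall>t\<in>set ss. supp s \<inter> supp t = {}) \<and> disjoint_cycles ss"
  unfolding disjoint_cycles_def
  by (simp add: All_less_Suc2 all_set_conv_all_nth) blast

lemma supp_cycle_of_list: "distinct c \<Longrightarrow> length c \<ge> 2 \<Longrightarrow> supp (cycle_of_list c) = set c"
proof (intro equalityI subsetI)
  fix x assume "x \<in> supp (cycle_of_list c)"
  then show "x \<in> set c"
    using id_outside_supp by (fastforce simp: supp_def)
next
  fix x assume c: "distinct c" "length c \<ge> 2" and x: "x \<in> set c"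
  have "card (orbit (cycle_of_list c) x) \<ge> 2"
    using orbit_cycle_of_list[OF c(1) x] c by (simp add: distinct_card)
  then show "x \<in> supp (cycle_of_list c)"
    using orbit_eq_singleton_iff[of "cycle_of_list c" x] by (auto simp: supp_def)
qed

lemma disjoint_cycles_cycle_lists:
  assumes "disjoint_cycles ss"
  obtains cs where "\<forall>i<length ss. distinct (cs i) \<and> cs i \<noteq> [] \<and> ss ! i = cycle_of_list (cs i)"
proof -
  have "\<forall>i\<in>{..<length ss}. \<exists>c. distinct c \<and> c \<noteq> [] \<and> ss ! i = cycle_of_list c"
    using assms nth_mem unfolding disjoint_cycles_def is_cycle_len_def by fastforce
  then show ?thesis
    using that bchoice by (metis lessThan_iff)
qed

lemma prod_perms_eq_prod_cycle_lists:
  assumes "finite B" "\<forall>i\<in>B. ss ! i = cycle_of_list (cs i)"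
  shows "prod_perms ss B = prod_cycle_lists (map cs (sorted_list_of_set B))"
proof -
  have "foldr (\<lambda>j g. ss ! j \<circ> g) xs id = prod_cycle_lists (map cs xs)"
    if "\<forall>j\<in>set xs. ss ! j = cycle_of_list (cs j)" for xs
    using that by (induction xs) auto
  then show ?thesis
    using assms by (simp add: prod_perms_def)
qed

lemma disjoint_cycle_lists_nontrivial_map:
  assumes "distinct xs" "\<forall>i\<in>set xs. distinct (cs i)"
    and "\<forall>i\<in>set xs. \<forall>j\<in>set xs. i \<noteq> j \<longrightarrow> length (cs i) \<ge> 2 \<longrightarrow> length (cs j) \<ge> 2 \<longrightarrow>
      set (cs i) \<inter> set (cs j) = {}"
  shows "disjoint_cycle_lists (nontrivial_cycles (map cs xs))"
  using assms by (induction xs) (auto simp: disjoint_cycle_lists_def nontrivial_cycles_def)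

lemma disjoint_cycles_set_disjoint:
  assumes ss: "disjoint_cycles ss"
    and cs: "\<forall>i<length ss. distinct (cs i) \<and> cs i \<noteq> [] \<and> ss ! i = cycle_of_list (cs i)"
    and ij: "i < length ss" "j < length ss" "i \<noteq> j" "length (cs i) \<ge> 2" "length (cs j) \<ge> 2"
  shows "set (cs i) \<inter> set (cs j) = {}"
proof -
  have "supp (ss ! i) = set (cs i)" "supp (ss ! j) = set (cs j)"
    using cs supp_cycle_of_list ij by auto
  moreover have "supp (ss ! i) \<inter> supp (ss ! j) = {}"
    using ss ij by (simp add: disjoint_cycles_def)
  ultimately show ?thesis
    by simp
qed

lemma deriv0_on_young_gf_cycles:
  assumes ss: "disjoint_cycles ss" and B: "B \<subseteq> {..<length ss}" and n: "n > 0"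
  shows "deriv0_on (young_gf n rho) (nth (map (\<lambda>s. tlen s + 1) ss)) B =
    Mrho n rho (prod_perms ss B) * real n powr (real (\<Sum>i\<in>B. tlen (ss ! i)) / 2)"
proof -
  obtain cs where cs: "\<forall>i<length ss. distinct (cs i) \<and> cs i \<noteq> [] \<and> ss ! i = cycle_of_list (cs i)"
    using disjoint_cycles_cycle_lists[OF ss] .
  let ?h = "nth (map (\<lambda>s. tlen s + 1) ss)"
  define L where "L = nontrivial_cycles (map cs (sorted_list_of_set B))"
  have finB: "finite B"
    using B finite_subset by blast
  have h: "?h i = length (cs i)" if "i \<in> B" for i
    using that B cs tlen_cycle_of_list by auto
  have "disjoint_cycle_lists L"
    unfolding L_def using B cs finB disjoint_cycles_set_disjoint[OF ss cs]
    by (intro disjoint_cycle_lists_nontrivial_map) (auto simp: subset_iff)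
  moreover have "prod_perms ss B = prod_cycle_lists (map cs (sorted_list_of_set B))"
    using B cs by (intro prod_perms_eq_prod_cycle_lists[OF finB]) auto
  then have "prod_cycle_lists L = prod_perms ss B"
    by (simp add: L_def prod_cycle_lists_nontrivial_cycles)
  moreover have "count (mset (map length L)) k = count (labels ?h B) k" if "k \<ge> 2" for k
  proof -
    have "mset (sorted_list_of_set B) = mset_set B"
      using finB by (metis distinct_sorted_list_of_set mset_set_set set_sorted_list_of_set)
    then have "mset (map length (map cs (sorted_list_of_set B))) = labels ?h B"
      using h finB by (auto simp: labels_def intro!: image_mset_cong)
    then show ?thesis
      using count_lengths_nontrivial_cycles[OF that] by (simp add: L_def image_mset.compositionality)
  qed
  moreover have "(\<Sum>i\<in>B. ?h i - 1) = (\<Sum>i\<in>B. tlen (ss ! i))"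
    using B by (intro sum.cong) auto
  moreover have "\<forall>i\<in>B. ?h i \<ge> 1"
    using B by auto
  ultimately show ?thesis
    using deriv0_on_young_gf[OF finB _ n, of ?h L rho] by simp
qed

lemma sum_blocks_partition_on:
  assumes "finite S" "partition_on S P"
  shows "(\<Sum>B\<in>P. sum f B) = sum f S"
proof -
  have "(\<Sum>B\<in>P. sum f B) = sum f (\<Union>P)"
    using assms partition_onD2[OF assms(2)] partition_onD1[OF assms(2)]
    by (intro sum.Union_disjoint[unfolded comp_def, symmetric]) (auto simp: disjoint_def intro: finite_subset)
  then show ?thesis
    using partition_onD1[OF assms(2)] by simp
qed

lemma prod_deriv0_on_young_gf_blocks:
  assumes ss: "disjoint_cycles ss" and P: "partition_on {..<length ss} P" and n: "n > 0"
  shows "(\<Prod>B\<in>P. deriv0_on (young_gf n rho) (nth (map (\<lambda>s. tlen s + 1) ss)) B) =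
    real n powr (real (sum_list (map tlen ss)) / 2) * (\<Prod>B\<in>P. Mrho n rho (prod_perms ss B))"
proof -
  have "(\<Prod>B\<in>P. deriv0_on (young_gf n rho) (nth (map (\<lambda>s. tlen s + 1) ss)) B) =
      (\<Prod>B\<in>P. Mrho n rho (prod_perms ss B) * real n powr (real (\<Sum>i\<in>B. tlen (ss ! i)) / 2))"
    using partition_onD1[OF P] ss n by (intro prod.cong refl deriv0_on_young_gf_cycles) auto
  also have "\<dots> = (\<Prod>B\<in>P. Mrho n rho (prod_perms ss B)) *
      real n powr ((\<Sum>B\<in>P. \<Sum>i\<in>B. tlen (ss ! i)) / 2)"
    using n by (simp add: prod.distrib powr_sum sum_divide_distrib)
  also have "(\<Sum>B\<in>P. \<Sum>i\<in>B. tlen (ss ! i)) = (\<Sum>i<length ss. tlen (ss ! i))"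
    using sum_blocks_partition_on[OF _ P] by simp
  also have "\<dots> = sum_list (map tlen ss)"
    by (simp add: sum_list_sum_nth atLeast0LessThan)
  finally show ?thesis
    by simp
qed

lemma deriv0_mps_ln_young_gf:
  assumes ss: "disjoint_cycles ss" "ss \<noteq> []" and n: "n > 0"
  shows "deriv0 (mps_ln (young_gf n rho)) (map (\<lambda>s. tlen s + 1) ss) =
    real n powr (real (sum_list (map tlen ss)) / 2) * kappa n rho ss"
proof -
  let ?h = "nth (map (\<lambda>s. tlen s + 1) ss)" and ?r = "length ss"
  have "{..<?r} \<noteq> {}"
    using ss(2) by (metis lessThan_iff length_greater_0_conv empty_iff)
  then have "deriv0 (mps_ln (young_gf n rho)) (map (\<lambda>s. tlen s + 1) ss) =
      (\<Sum>P\<in>{P. partition_on {..<?r} P}.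
        (-1) ^ (card P - 1) * fact (card P - 1) * (\<Prod>B\<in>P. deriv0_on (young_gf n rho) ?h B))"
    by (simp add: deriv0_eq_deriv0_on deriv0_on_mps_ln)
  also have "\<dots> = (\<Sum>P\<in>{P. partition_on {..<?r} P}.
      real n powr (real (sum_list (map tlen ss)) / 2) *
      ((-1) ^ (card P - 1) * fact (card P - 1) * (\<Prod>B\<in>P. Mrho n rho (prod_perms ss B))))"
    by (intro sum.cong refl) (subst prod_deriv0_on_young_gf_blocks[OF ss(1) _ n]; simp)
  also have "\<dots> = real n powr (real (sum_list (map tlen ss)) / 2) * kappa n rho ss"
    by (simp add: kappa_def sum_distrib_left)
  finally show ?thesis .
qed

lemma is_cycle_len_upt: "k \<ge> 1 \<Longrightarrow> is_cycle_len k (cycle_of_list [m..<m + k])"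
  unfolding is_cycle_len_def by (intro conjI exI[of _ "[m..<m + k]"]) auto

lemma disjoint_cycles_exist:
  "\<forall>k\<in>set ks. k \<ge> 1 \<Longrightarrow>
     \<exists>ss. map (\<lambda>s. tlen s + 1) ss = ks \<and> disjoint_cycles ss \<and> (\<forall>s\<in>set ss. supp s \<subseteq> {..<sum_list ks})"
proof (induction ks)
  case (Cons k ks)
  then obtain ss where ss: "map (\<lambda>s. tlen s + 1) ss = ks" "disjoint_cycles ss"
    "\<forall>s\<in>set ss. supp s \<subseteq> {..<sum_list ks}"
    by auto
  define s where "s = cycle_of_list [sum_list ks..<sum_list ks + k]"
  have s_cycle: "is_cycle_len k s"
    using Cons.prems is_cycle_len_upt unfolding s_def by simp
  have supp_s: "supp s \<subseteq> {sum_list ks..<sum_list ks + k}"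
    unfolding s_def supp_def using id_outside_supp[of _ "[sum_list ks..<sum_list ks + k]"] by fastforce
  then have "\<forall>t\<in>set ss. supp s \<inter> supp t = {}"
    using ss(3) by fastforce
  then show ?case
    using ss s_cycle supp_s tlen_is_cycle_len[OF s_cycle]
    by (intro exI[of _ "s # ss"]) (fastforce simp: disjoint_cycles_Cons)
qed (simp add: disjoint_cycles_def)

section \<open>CLT-appropriateness in terms of cycles\<close>

lemma partition_on_singleton_iff: "partition_on {a} P \<longleftrightarrow> P = {{a}}"
proof
  assume P: "partition_on {a} P"
  then have "B = {a}" if "B \<in> P" for B
    using that partition_onD1[OF P] partition_onD3[OF P] by (metis Union_upper subset_singletonD)
  moreover have "P \<noteq> {}"
    using partition_onD1[OF P] by auto
  ultimately show "P = {{a}}"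
    by blast
qed (simp add: partition_on_space)

lemma kappa_singleton: "kappa n rho [s] = Mrho n rho s"
  by (simp add: kappa_def lessThan_Suc partition_on_singleton_iff prod_perms_def)

lemma disjoint_cycles_Nil: "disjoint_cycles []"
  by (simp add: disjoint_cycles_def)

lemma disjoint_cycles_is_cycle_len: "disjoint_cycles ss \<Longrightarrow> s \<in> set ss \<Longrightarrow> is_cycle_len (tlen s + 1) s"
  using tlen_is_cycle_len by (auto simp: disjoint_cycles_def)

lemma tendsto_deriv0_mps_ln_young_gf_iff:
  assumes "disjoint_cycles ss" "ss \<noteq> []"
  shows "(\<lambda>n. f n * deriv0 (mps_ln (young_gf n (rho n))) (map (\<lambda>s. tlen s + 1) ss)) \<longlonglongrightarrow> L \<longleftrightarrow>
    (\<lambda>n. f n * (real n powr (real (sum_list (map tlen ss)) / 2) * kappa n (rho n) ss)) \<longlonglongrightarrow> L"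
  by (intro tendsto_cong eventually_mono[OF eventually_gt_at_top[of 0]])
    (subst deriv0_mps_ln_young_gf[OF assms]; simp)

lemma tendsto_cycle_moment_iff:
  assumes "is_cycle_len k s"
  shows "(\<lambda>n. deriv0 (mps_ln (young_gf n (rho n))) [k]) \<longlonglongrightarrow> L \<longleftrightarrow>
    (\<lambda>n. real n powr (real (tlen s) / 2) * Mrho n (rho n) s) \<longlonglongrightarrow> L"
proof -
  have "disjoint_cycles [s]" "map (\<lambda>s. tlen s + 1) [s] = [k]"
    using assms tlen_is_cycle_len by (auto simp: disjoint_cycles_def)
  then show ?thesis
    using tendsto_deriv0_mps_ln_young_gf_iff[of "[s]" "\<lambda>_. 1" rho L] by (simp add: kappa_singleton)
qed

lemma tendsto_cycle_pair_cumulant_iff: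
  assumes "is_cycle_len k1 s1" "is_cycle_len k2 s2" "supp s1 \<inter> supp s2 = {}"
  shows "(\<lambda>n. real n * deriv0 (mps_ln (young_gf n (rho n))) [k1, k2]) \<longlonglongrightarrow> L \<longleftrightarrow>
    (\<lambda>n. real n powr (real (tlen s1 + tlen s2) / 2 + 1) * kappa n (rho n) [s1, s2]) \<longlonglongrightarrow> L"
proof -
  have "disjoint_cycles [s1, s2]"
    using assms by (auto simp: disjoint_cycles_Cons disjoint_cycles_Nil)
  moreover have "map (\<lambda>s. tlen s + 1) [s1, s2] = [k1, k2]"
    using assms tlen_is_cycle_len by simp
  moreover have "(\<lambda>n. real n *
        (real n powr (real (sum_list (map tlen [s1, s2])) / 2) * kappa n (rho n) [s1, s2])) =
      (\<lambda>n. real n powr (real (tlen s1 + tlen s2) / 2 + 1) * kappa n (rho n) [s1, s2])"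
    by (simp add: fun_eq_iff powr_add)
  ultimately show ?thesis
    using tendsto_deriv0_mps_ln_young_gf_iff[of "[s1, s2]" real rho L] by simp
qed

lemma tendsto_cycles_cumulant_iff:
  assumes "disjoint_cycles ss" "ss \<noteq> []"
  shows "(\<lambda>n. real n powr (real (length ss) / 2) *
      deriv0 (mps_ln (young_gf n (rho n))) (map (\<lambda>s. tlen s + 1) ss)) \<longlonglongrightarrow> L \<longleftrightarrow>
    (\<lambda>n. real n powr (real (sum_list (map tlen ss) + length ss) / 2) * kappa n (rho n) ss) \<longlonglongrightarrow> L"
proof -
  have weights: "(\<lambda>n. real n powr (real (length ss) / 2) *
        (real n powr (real (sum_list (map tlen ss)) / 2) * kappa n (rho n) ss)) =
      (\<lambda>n. real n powr (real (sum_list (map tlen ss) + length ss) / 2) * kappa n (rho n) ss)"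
    by (simp add: fun_eq_iff powr_add add_divide_distrib mult_ac)
  from tendsto_deriv0_mps_ln_young_gf_iff[OF assms, of "\<lambda>n. real n powr (real (length ss) / 2)" rho L]
  show ?thesis
    unfolding weights .
qed

lemma disjoint_cycle_pair_exists:
  assumes "i \<ge> 1" "j \<ge> 1"
  shows "\<exists>s1 s2. is_cycle_len i s1 \<and> is_cycle_len j s2 \<and> supp s1 \<inter> supp s2 = {}"
proof -
  have "\<forall>k\<in>set [i, j]. k \<ge> 1"
    using assms by simp
  from disjoint_cycles_exist[OF this]
  obtain ss where ss: "map (\<lambda>s. tlen s + 1) ss = [i, j]" "disjoint_cycles ss"
    by metis
  then obtain s1 s2 where ss_eq: "ss = [s1, s2]"
    by (auto simp: map_eq_Cons_conv)
  have "is_cycle_len i s1" "is_cycle_len j s2"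
    using disjoint_cycles_is_cycle_len[OF ss(2)] ss(1) ss_eq by auto
  moreover have "supp s1 \<inter> supp s2 = {}"
    using ss(2) ss_eq by (simp add: disjoint_cycles_Cons)
  ultimately show ?thesis
    by blast
qed

lemma tendsto_first_derivatives_iff:
  "(\<forall>i\<ge>1. (\<lambda>n. deriv0 (mps_ln (young_gf n (rho n))) [i]) \<longlonglongrightarrow> c i) \<longleftrightarrow>
   (\<forall>k s. is_cycle_len k s \<longrightarrow> (\<lambda>n. real n powr (real (tlen s) / 2) * Mrho n (rho n) s) \<longlonglongrightarrow> c k)"
proof (intro iffI allI impI)
  fix k s
  assume lim: "\<forall>i\<ge>1. (\<lambda>n. deriv0 (mps_ln (young_gf n (rho n))) [i]) \<longlonglongrightarrow> c i"
    and s: "is_cycle_len k s"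
  then have "k \<ge> 1"
    by (simp add: is_cycle_len_def)
  with lim tendsto_cycle_moment_iff[OF s]
  show "(\<lambda>n. real n powr (real (tlen s) / 2) * Mrho n (rho n) s) \<longlonglongrightarrow> c k"
    by blast
next
  fix i :: nat
  assume "\<forall>k s. is_cycle_len k s \<longrightarrow> (\<lambda>n. real n powr (real (tlen s) / 2) * Mrho n (rho n) s) \<longlonglongrightarrow> c k"
    and "i \<ge> 1"
  then show "(\<lambda>n. deriv0 (mps_ln (young_gf n (rho n))) [i]) \<longlonglongrightarrow> c i"
    using tendsto_cycle_moment_iff is_cycle_len_upt[of i 0] by blast
qed

lemma tendsto_second_derivatives_iff:
  "(\<forall>i\<ge>1. \<forall>j\<ge>1. (\<lambda>n. real n * deriv0 (mps_ln (young_gf n (rho n))) [i, j]) \<longlonglongrightarrow> d i j) \<longleftrightarrow>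
   (\<forall>k1 k2 s1 s2. is_cycle_len k1 s1 \<longrightarrow> is_cycle_len k2 s2 \<longrightarrow> supp s1 \<inter> supp s2 = {} \<longrightarrow>
      (\<lambda>n. real n powr (real (tlen s1 + tlen s2) / 2 + 1) * kappa n (rho n) [s1, s2]) \<longlonglongrightarrow> d k1 k2)"
proof (intro iffI allI impI)
  fix k1 k2 s1 s2
  assume lim: "\<forall>i\<ge>1. \<forall>j\<ge>1. (\<lambda>n. real n * deriv0 (mps_ln (young_gf n (rho n))) [i, j]) \<longlonglongrightarrow> d i j"
    and s: "is_cycle_len k1 s1" "is_cycle_len k2 s2" "supp s1 \<inter> supp s2 = {}"
  then have "k1 \<ge> 1" "k2 \<ge> 1"
    by (simp_all add: is_cycle_len_def)
  with lim tendsto_cycle_pair_cumulant_iff[OF s]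
  show "(\<lambda>n. real n powr (real (tlen s1 + tlen s2) / 2 + 1) * kappa n (rho n) [s1, s2]) \<longlonglongrightarrow> d k1 k2"
    by blast
next
  fix i j :: nat
  assume lim: "\<forall>k1 k2 s1 s2. is_cycle_len k1 s1 \<longrightarrow> is_cycle_len k2 s2 \<longrightarrow> supp s1 \<inter> supp s2 = {} \<longrightarrow>
      (\<lambda>n. real n powr (real (tlen s1 + tlen s2) / 2 + 1) * kappa n (rho n) [s1, s2]) \<longlonglongrightarrow> d k1 k2"
    and "i \<ge> 1" "j \<ge> 1"
  then obtain s1 s2 where "is_cycle_len i s1" "is_cycle_len j s2" "supp s1 \<inter> supp s2 = {}"
    using disjoint_cycle_pair_exists by blast
  with lim tendsto_cycle_pair_cumulant_iff
  show "(\<lambda>n. real n * deriv0 (mps_ln (young_gf n (rho n))) [i, j]) \<longlonglongrightarrow> d i j"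
    by blast
qed

lemma tendsto_higher_derivatives_iff:
  "(\<forall>is. length is \<ge> 3 \<longrightarrow> (\<forall>i\<in>set is. i \<ge> 1) \<longrightarrow>
      (\<lambda>n. real n powr (real (length is) / 2) * deriv0 (mps_ln (young_gf n (rho n))) is) \<longlonglongrightarrow> 0) \<longleftrightarrow>
   (\<forall>ss. length ss \<ge> 3 \<longrightarrow> (\<forall>s\<in>set ss. \<exists>k. is_cycle_len k s) \<longrightarrow>
      (\<forall>i<length ss. \<forall>j<length ss. i \<noteq> j \<longrightarrow> supp (ss ! i) \<inter> supp (ss ! j) = {}) \<longrightarrow>
      (\<lambda>n. real n powr (real (sum_list (map tlen ss) + length ss) / 2) * kappa n (rho n) ss) \<longlonglongrightarrow> 0)"
proof (intro iffI allI impI)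
  fix ss :: "(nat \<Rightarrow> nat) list"
  assume lim: "\<forall>is. length is \<ge> 3 \<longrightarrow> (\<forall>i\<in>set is. i \<ge> 1) \<longrightarrow>
      (\<lambda>n. real n powr (real (length is) / 2) * deriv0 (mps_ln (young_gf n (rho n))) is) \<longlonglongrightarrow> 0"
    and ss: "length ss \<ge> 3" "\<forall>s\<in>set ss. \<exists>k. is_cycle_len k s"
      "\<forall>i<length ss. \<forall>j<length ss. i \<noteq> j \<longrightarrow> supp (ss ! i) \<inter> supp (ss ! j) = {}"
  have "(\<lambda>n. real n powr (real (length (map (\<lambda>s. tlen s + 1) ss)) / 2) *
      deriv0 (mps_ln (young_gf n (rho n))) (map (\<lambda>s. tlen s + 1) ss)) \<longlonglongrightarrow> 0"
    by (rule lim[rule_format]) (use ss(1) in auto)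
  then have "(\<lambda>n. real n powr (real (length ss) / 2) *
      deriv0 (mps_ln (young_gf n (rho n))) (map (\<lambda>s. tlen s + 1) ss)) \<longlonglongrightarrow> 0"
    by simp
  moreover have "disjoint_cycles ss" "ss \<noteq> []"
    using ss by (auto simp: disjoint_cycles_def)
  ultimately show "(\<lambda>n. real n powr (real (sum_list (map tlen ss) + length ss) / 2) *
      kappa n (rho n) ss) \<longlonglongrightarrow> 0"
    using tendsto_cycles_cumulant_iff by blast
next
  fix "is" :: "nat list"
  assume lim: "\<forall>ss. length ss \<ge> 3 \<longrightarrow> (\<forall>s\<in>set ss. \<exists>k. is_cycle_len k s) \<longrightarrow>
      (\<forall>i<length ss. \<forall>j<length ss. i \<noteq> j \<longrightarrow> supp (ss ! i) \<inter> supp (ss ! j) = {}) \<longrightarrow>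
      (\<lambda>n. real n powr (real (sum_list (map tlen ss) + length ss) / 2) * kappa n (rho n) ss) \<longlonglongrightarrow> 0"
    and "length is \<ge> 3" "\<forall>i\<in>set is. i \<ge> 1"
  obtain ss where ss: "map (\<lambda>s. tlen s + 1) ss = is" "disjoint_cycles ss"
    using disjoint_cycles_exist[OF \<open>\<forall>i\<in>set is. i \<ge> 1\<close>] by metis
  have len: "length ss = length is"
    using ss(1) by auto
  with \<open>length is \<ge> 3\<close> have "length ss \<ge> 3" "ss \<noteq> []"
    by auto
  then have "(\<lambda>n. real n powr (real (sum_list (map tlen ss) + length ss) / 2) * kappa n (rho n) ss)
      \<longlonglongrightarrow> 0"
    using lim ss(2) unfolding disjoint_cycles_def by blast
  then have "(\<lambda>n. real n powr (real (length ss) / 2) *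
      deriv0 (mps_ln (young_gf n (rho n))) (map (\<lambda>s. tlen s + 1) ss)) \<longlonglongrightarrow> 0"
    using tendsto_cycles_cumulant_iff[OF ss(2) \<open>ss \<noteq> []\<close>] by blast
  then show "(\<lambda>n. real n powr (real (length is) / 2) * deriv0 (mps_ln (young_gf n (rho n))) is)
      \<longlonglongrightarrow> 0"
    unfolding ss(1) len .
qed

theorem mainTheorem11:
  fixes rho :: "nat \<Rightarrow> nat list \<Rightarrow> real"
  assumes "\<forall>n\<ge>1. prob_on_Y n (rho n)"
  shows "CLT_appropriate rho \<longleftrightarrow>
    (\<exists>(c :: nat \<Rightarrow> real) (d :: nat \<Rightarrow> nat \<Rightarrow> real).
      (\<forall>k s. is_cycle_len k s \<longrightarrow>
         (\<lambda>n. real n powr (real (tlen s) / 2) * Mrho n (rho n) s) \<longlonglongrightarrow> c k) \<and>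
      (\<forall>k1 k2 s1 s2. is_cycle_len k1 s1 \<longrightarrow> is_cycle_len k2 s2 \<longrightarrow> supp s1 \<inter> supp s2 = {} \<longrightarrow>
         (\<lambda>n. real n powr (real (tlen s1 + tlen s2) / 2 + 1) * kappa n (rho n) [s1, s2])
           \<longlonglongrightarrow> d k1 k2) \<and>
      (\<forall>ss. length ss \<ge> 3 \<longrightarrow> (\<forall>s\<in>set ss. \<exists>k. is_cycle_len k s) \<longrightarrow>
         (\<forall>i<length ss. \<forall>j<length ss. i \<noteq> j \<longrightarrow> supp (ss ! i) \<inter> supp (ss ! j) = {}) \<longrightarrow>
         (\<lambda>n. real n powr (real (sum_list (map tlen ss) + length ss) / 2) * kappa n (rho n) ss)
           \<longlonglongrightarrow> 0))"
  unfolding CLT_appropriate_def tendsto_first_derivatives_iff tendsto_second_derivatives_iff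
    tendsto_higher_derivatives_iff ..

end
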